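(* Let $c=1$ and $\phi(x;\mu)=\exp\!\big(-\tfrac12(x-\mu)^2\big)$ for $x,\mu\in\mathbb{R}$. Consider the wave equation $\partial_t^2 u = \partial_x^2 u$ on $\mathbb{R}$ with initial data $u(0,x)=\phi(x;-2)+\phi(x;2)$ and $\partial_t u(0,x)=\partial_\mu\phi(x;-2)-\partial_\mu\phi(x;2)$. Its exact solution is $u(t,x)=\phi(x-t;-2)+\phi(x+t;2)$. Write it in first-order form for the state $(u^{(1)},u^{(2)})=(u,\partial_t u)$, i.e. $\partial_t (u^{(1)},u^{(2)})=\mathcal{F}(u^{(1)},u^{(2)}):=(u^{(2)},\partial_x^2 u^{(1)})$, and use the parametrization $\hat u(\theta,x)=(\hat u^{(1)}(\theta,x),\hat u^{(2)}(\theta,x))$, $\theta\in\mathbb{R}^4$, with $$\hat u^{(1)}(\theta,x)=\phi(x;\theta_1)+\phi(x;\theta_2),\qquad \hat u^{(2)}(\theta,x)=\partial_\mu\phi(x;\theta_3)-\partial_\mu\phi(x;\theta_4).$$ Let $\tau>0$ and let $$\theta^*(t)=[-2+t,\;2-t,\;-2+t,\;2-t]^\top,\qquad q=\dot\theta^*(t)=[1,-1,1,-1]^\top.$$ Consider the continuous-time Dirac–Frenkel–Onsager (DFO) dynamics $$\tau\,\dot m(t)=\bar\eta(\theta(t))-m(t),\qquad \dot\theta(t)=\bar\eta(\theta(t))+\lambda P(\theta(t))\,m(t),$$ initialized with $\theta(0)=\theta^*(0)$ and $m(0)=0$, and choose $$\lambda=\big(1-e^{-2/\tau}\big)^{-1}.$$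 Then the path $\theta^*(t)$ satisfies the continuous-time DFO dynamics for all $t\ge 0$ (with $m(t)$ the corresponding solution of the Onsager equation along $\theta^*$, so that in particular $m(t)=(1-e^{-t/\tau})q$ for $0\le t<2$ and $\dot\theta^*(2)=\bar\eta(\theta^*(2))+\lambda P(\theta^*(2))m(2)$ with $m(2)=(1-e^{-2/\tau})q$), and the represented function $\hat u(\theta^*(t),\cdot)$ equals the exact solution $(u(t,\cdot),\partial_t u(t,\cdot))$ for all $t\ge 0$.
   Context: $\langle\cdot,\cdot\rangle$ denotes the $L^2(\mathbb{R};\mathbb{R}^2)$ inner product (sum of the $L^2$ inner products of the two components). For $\theta\in\mathbb{R}^4$, the Gram matrix $G(\theta)\in\mathbb{R}^{4\times4}$ and vector $g(\theta)\in\mathbb{R}^4$ are $G_{ij}(\theta)=\langle\partial_{\theta_i}\hat u(\theta,\cdot),\partial_{\theta_j}\hat u(\theta,\cdot)\rangle$ and $g_i(\theta)=\langle\partial_{\theta_i}\hat u(\theta,\cdot),\mathcal{F}(\hat u(\theta,\cdot))\rangle$; these are the normal equations of the Dirac–Frenkel least-squares problem $\min_{\eta\in\mathbb{R}^4}\|\nabla_\theta\hat u(\theta,\cdot)^\top\eta-\mathcal{F}(\hat u(\theta,\cdot))\|^2$. The reference (Dirac–Frenkel) velocity is the minimal-norm solution $\bar\eta(\theta)=G(\theta)^{+}g(\theta)$ ($^{+}$ = Moore–Penrose pseudoinverse). $P(\theta)$ denotes the orthogonal projector of $\mathbb{R}^4$ onto $\operatorname{null}(G(\theta))$. *)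

theory Defs
  imports "HOL-Analysis.Analysis"
begin

definition phi :: "real \<Rightarrow> real \<Rightarrow> real" where
  "phi x \<mu> = exp (-(1/2) * (x - \<mu>)\<^sup>2)"

definition dmu_phi :: "real \<Rightarrow> real \<Rightarrow> real" where
  "dmu_phi x \<mu> = deriv (\<lambda>m. phi x m) \<mu>"

definition uhat1 :: "real^4 \<Rightarrow> real \<Rightarrow> real" where
  "uhat1 \<theta> x = phi x (\<theta>$1) + phi x (\<theta>$2)"

definition uhat2 :: "real^4 \<Rightarrow> real \<Rightarrow> real" where
  "uhat2 \<theta> x = dmu_phi x (\<theta>$3) - dmu_phi x (\<theta>$4)"

definition uhat :: "real^4 \<Rightarrow> real \<Rightarrow> real \<times> real" where
  "uhat \<theta> x = (uhat1 \<theta> x, uhat2 \<theta> x)"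

definition l2inner :: "(real \<Rightarrow> real \<times> real) \<Rightarrow> (real \<Rightarrow> real \<times> real) \<Rightarrow> real" where
  "l2inner f g = (LINT x|lborel. fst (f x) * fst (g x)) + (LINT x|lborel. snd (f x) * snd (g x))"

definition Fop :: "(real \<Rightarrow> real \<times> real) \<Rightarrow> real \<Rightarrow> real \<times> real" where
  "Fop w x = (snd (w x), deriv (deriv (\<lambda>y. fst (w y))) x)"

definition dtheta :: "4 \<Rightarrow> real^4 \<Rightarrow> real \<Rightarrow> real \<times> real" where
  "dtheta i \<theta> x =
     (deriv (\<lambda>s. uhat1 (\<theta> + s *\<^sub>R axis i 1) x) 0,
      deriv (\<lambda>s. uhat2 (\<theta> + s *\<^sub>R axis i 1) x) 0)"

definition gram :: "real^4 \<Rightarrow> real^4^4" where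
  "gram \<theta> = (\<chi> i j. l2inner (dtheta i \<theta>) (dtheta j \<theta>))"

definition gvec :: "real^4 \<Rightarrow> real^4" where
  "gvec \<theta> = (\<chi> i. l2inner (dtheta i \<theta>) (Fop (uhat \<theta>)))"

definition pinv :: "real^'n^'m \<Rightarrow> real^'m^'n" where
  "pinv A = (THE X. A ** X ** A = A \<and> X ** A ** X = X \<and>
                    transpose (A ** X) = A ** X \<and> transpose (X ** A) = X ** A)"

definition null_proj :: "real^'n^'m \<Rightarrow> real^'n \<Rightarrow> real^'n" where
  "null_proj A v = (THE p. A *v p = 0 \<and> (\<forall>w. A *v w = 0 \<longrightarrow> (v - p) \<bullet> w = 0))"

definition eta_bar :: "real^4 \<Rightarrow> real^4" where
  "eta_bar \<theta> = pinv (gram \<theta>) *v gvec \<theta>"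

definition theta_star :: "real \<Rightarrow> real^4" where
  "theta_star t = vector [-2 + t, 2 - t, -2 + t, 2 - t]"

definition qvec :: "real^4" where
  "qvec = vector [1, -1, 1, -1]"

definition u_exact :: "real \<Rightarrow> real \<Rightarrow> real" where
  "u_exact t x = phi (x - t) (-2) + phi (x + t) 2"

end

theory Submission
  imports Defs "HOL-Probability.Distributions"
begin

text \<open>
  For \<open>t \<noteq> 2\<close> the two pulses have distinct centres, so the tangent functions
  \<open>psi (x - \<theta>$1)\<close>, \<open>psi (x - \<theta>$2)\<close>, \<open>chi (x - \<theta>$3)\<close>, \<open>chi (x - \<theta>$4)\<close> are linearly
  independent and the Gram matrix is invertible. Along \<open>theta_star\<close> the residual
  \<open>F(uhat) - \<Sum>i. q$i * \<partial>\<^sub>i uhat\<close> vanishes, so \<open>g = G q\<close>; hence \<open>eta_bar = q\<close> and \<open>P = 0\<close>,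
  and the Onsager equation \<open>\<tau> m' = q - m\<close> is solved by \<open>m t = (1 - exp (- t / \<tau>)) q\<close>.
  At the collision time \<open>t = 2\<close> the pulses coincide, \<open>theta_star 2 = 0\<close> and \<open>G\<close> has rank two:
  the minimal-norm velocity \<open>eta_bar 0 = (0, 0, 1, -1)\<close> loses the kernel component
  \<open>(1, -1, 0, 0)\<close> of \<open>q\<close>, and \<open>lam P m(2) = lam (1 - exp (-2 / \<tau>)) (1, -1, 0, 0)\<close> restores it
  exactly for the chosen \<open>lam\<close>. A single instant is a null set, so the integral form of the
  Onsager equation does not see the collision.
\<close>

lemma vector_4 [simp]:
  "(vector [x, y, z, w] :: 'a::zero^4) $ 1 = x"
  "(vector [x, y, z, w] :: 'a::zero^4) $ 2 = y"
  "(vector [x, y, z, w] :: 'a::zero^4) $ 3 = z"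
  "(vector [x, y, z, w] :: 'a::zero^4) $ 4 = w"
  unfolding vector_def by simp_all

section \<open>Pseudoinverse and kernel projection\<close>

lemma pinv_eqI:
  fixes A :: "real^'n^'m" and X :: "real^'m^'n"
  assumes AXA: "A ** X ** A = A" and XAX: "X ** A ** X = X"
    and AX: "transpose (A ** X) = A ** X" and XA: "transpose (X ** A) = X ** A"
  shows "pinv A = X"
  unfolding pinv_def
proof (rule the_equality)
  show "A ** X ** A = A \<and> X ** A ** X = X \<and> transpose (A ** X) = A ** X \<and> transpose (X ** A) = X ** A"
    using assms by blast
next
  fix Y
  assume "A ** Y ** A = A \<and> Y ** A ** Y = Y \<and> transpose (A ** Y) = A ** Y \<and> transpose (Y ** A) = Y ** A"
  then have AYA: "A ** Y ** A = A" and YAY: "Y ** A ** Y = Y"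
    and AY: "transpose (A ** Y) = A ** Y" and YA: "transpose (Y ** A) = Y ** A"
    by auto
  have tAYA: "transpose A = transpose A ** transpose Y ** transpose A"
    by (metis AYA matrix_transpose_mul matrix_mul_assoc)
  have tAXA: "transpose A = transpose A ** transpose X ** transpose A"
    by (metis AXA matrix_transpose_mul matrix_mul_assoc)
  have "X = X ** transpose X ** transpose A"
    by (metis XAX AX matrix_transpose_mul matrix_mul_assoc)
  also have "\<dots> = X ** transpose (A ** X) ** transpose (A ** Y)"
    by (subst tAYA) (simp add: matrix_transpose_mul matrix_mul_assoc)
  also have "\<dots> = X ** A ** Y"
    unfolding AX AY by (metis XAX matrix_mul_assoc)
  finally have X: "X = X ** A ** Y" .
  have "Y = transpose A ** transpose Y ** Y"
    by (metis YAY YA matrix_transpose_mul)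
  also have "\<dots> = transpose (X ** A) ** transpose (Y ** A) ** Y"
    by (subst tAXA) (simp add: matrix_transpose_mul matrix_mul_assoc)
  also have "\<dots> = X ** A ** Y"
    unfolding XA YA by (metis YAY matrix_mul_assoc)
  finally show "Y = X"
    using X by simp
qed

lemma null_proj_eqI:
  fixes A :: "real^'n^'m"
  assumes "A *v p = 0" and "\<And>w. A *v w = 0 \<Longrightarrow> (v - p) \<bullet> w = 0"
  shows "null_proj A v = p"
  unfolding null_proj_def
proof (rule the_equality)
  show "A *v p = 0 \<and> (\<forall>w. A *v w = 0 \<longrightarrow> (v - p) \<bullet> w = 0)"
    using assms by blast
next
  fix p'
  assume p': "A *v p' = 0 \<and> (\<forall>w. A *v w = 0 \<longrightarrow> (v - p') \<bullet> w = 0)"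
  then have "A *v (p' - p) = 0"
    using assms(1) by (simp add: matrix_vector_mult_diff_distrib)
  then have "(v - p) \<bullet> (p' - p) = 0" "(v - p') \<bullet> (p' - p) = 0"
    using assms(2) p' by blast+
  then have "(p' - p) \<bullet> (p' - p) = 0"
    by (simp add: inner_diff_left)
  then show "p' = p"
    by simp
qed

lemma
  fixes A :: "real^'n^'n"
  assumes "\<And>v. A *v v = 0 \<Longrightarrow> v = 0"
  shows pinv_mult_cancel_of_trivial_kernel: "pinv A *v (A *v v) = v"
    and null_proj_of_trivial_kernel: "null_proj A v = 0"
proof -
  obtain B where BA: "B ** A = mat 1"
    using assms matrix_left_invertible_ker by blast
  then have "A ** B = mat 1"
    using matrix_left_right_inverse by blast
  with BA have "pinv A = B"
    by (intro pinv_eqI) (simp_all add: transpose_mat)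
  then show "pinv A *v (A *v v) = v"
    by (simp add: matrix_vector_mul_assoc BA)
  show "null_proj A v = 0"
    by (rule null_proj_eqI) (auto dest: assms)
qed

section \<open>The Gaussian profile and its derivatives\<close>

text \<open>The first two \<open>\<mu>\<close>-derivatives of the profile: \<open>\<partial>\<^sub>\<mu> phi x \<mu> = psi (x - \<mu>)\<close> and
  \<open>\<partial>\<^sub>\<mu>\<^sup>2 phi x \<mu> = chi (x - \<mu>)\<close>.\<close>

definition psi :: "real \<Rightarrow> real" where
  "psi y = y * exp (-(1/2) * y\<^sup>2)"

definition chi :: "real \<Rightarrow> real" where
  "chi y = (y\<^sup>2 - 1) * exp (-(1/2) * y\<^sup>2)"

lemma phi_has_real_derivative [derivative_intros]:
  assumes "(f has_real_derivative f') (at t within S)" "(g has_real_derivative g') (at t within S)"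
  shows "((\<lambda>s. phi (f s) (g s)) has_real_derivative psi (f t - g t) * (g' - f')) (at t within S)"
  unfolding phi_def psi_def
  by (auto intro!: derivative_eq_intros assms simp: power2_eq_square algebra_simps)

lemma psi_has_real_derivative [derivative_intros]:
  assumes "(f has_real_derivative f') (at t within S)"
  shows "((\<lambda>s. psi (f s)) has_real_derivative - chi (f t) * f') (at t within S)"
  unfolding psi_def chi_def
  by (auto intro!: derivative_eq_intros assms simp: power2_eq_square algebra_simps)

lemma dmu_phi_eq: "dmu_phi x \<mu> = psi (x - \<mu>)"
  unfolding dmu_phi_def by (rule DERIV_imp_deriv) (auto intro!: derivative_eq_intros)

lemma dtheta_eq:
  "dtheta i \<theta> x =
     (of_bool (i = 1) * psi (x - \<theta>$1) + of_bool (i = 2) * psi (x - \<theta>$2),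
      of_bool (i = 3) * chi (x - \<theta>$3) - of_bool (i = 4) * chi (x - \<theta>$4))"
proof -
  have axis: "(\<theta> + s *\<^sub>R axis i 1) $ j = \<theta> $ j + s * of_bool (i = j)" for s and j :: 4
    by (simp add: axis_def)
  have "((\<lambda>s. uhat1 (\<theta> + s *\<^sub>R axis i 1) x) has_real_derivative
      of_bool (i = 1) * psi (x - \<theta>$1) + of_bool (i = 2) * psi (x - \<theta>$2)) (at 0)"
    unfolding uhat1_def axis
    by (rule derivative_eq_intros refl)+ simp
  moreover have "((\<lambda>s. uhat2 (\<theta> + s *\<^sub>R axis i 1) x) has_real_derivative
      of_bool (i = 3) * chi (x - \<theta>$3) - of_bool (i = 4) * chi (x - \<theta>$4)) (at 0)"
    unfolding uhat2_def dmu_phi_eq axis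
    by (rule derivative_eq_intros refl)+ simp
  ultimately show ?thesis
    unfolding dtheta_def by (simp add: DERIV_imp_deriv)
qed

lemma Fop_uhat:
  "Fop (uhat \<theta>) x = (psi (x - \<theta>$3) - psi (x - \<theta>$4), chi (x - \<theta>$1) + chi (x - \<theta>$2))"
proof -
  have "deriv (\<lambda>y. fst (uhat \<theta> y)) = (\<lambda>y. - psi (y - \<theta>$1) - psi (y - \<theta>$2))"
    unfolding uhat_def uhat1_def fst_conv
    by (intro ext DERIV_imp_deriv, (rule derivative_eq_intros refl)+) simp
  moreover have "deriv (\<lambda>y. - psi (y - \<theta>$1) - psi (y - \<theta>$2)) x = chi (x - \<theta>$1) + chi (x - \<theta>$2)"
    by (intro DERIV_imp_deriv, (rule derivative_eq_intros refl)+) simp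
  ultimately show ?thesis
    by (simp add: Fop_def uhat_def uhat2_def dmu_phi_eq)
qed

section \<open>Square integrability\<close>

lemma abs_psi_le_1: "\<bar>psi y\<bar> \<le> 1"
proof -
  have "\<bar>y\<bar> \<le> 1 + y\<^sup>2/2"
    using sum_squares_ge_zero[of "\<bar>y\<bar> - 1" 0] by (simp add: power2_eq_square algebra_simps)
  also have "\<dots> \<le> exp (y\<^sup>2/2)"
    using exp_ge_add_one_self[of "y\<^sup>2/2"] by simp
  finally have "\<bar>y\<bar> * exp (-(y\<^sup>2/2)) \<le> exp (y\<^sup>2/2) * exp (-(y\<^sup>2/2))"
    by (intro mult_right_mono) auto
  also have "\<dots> = 1"
    by (simp flip: exp_add)
  finally show ?thesis
    by (simp add: psi_def abs_mult)
qed

lemma abs_chi_le_2: "\<bar>chi y\<bar> \<le> 2"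
proof -
  have "\<bar>y\<^sup>2 - 1\<bar> \<le> 2 * (1 + y\<^sup>2/2)"
    by (simp add: abs_le_iff)
  also have "\<dots> \<le> 2 * exp (y\<^sup>2/2)"
    using exp_ge_add_one_self[of "y\<^sup>2/2"] by (intro mult_left_mono) auto
  finally have "\<bar>y\<^sup>2 - 1\<bar> * exp (-(y\<^sup>2/2)) \<le> 2 * exp (y\<^sup>2/2) * exp (-(y\<^sup>2/2))"
    by (intro mult_right_mono) auto
  also have "\<dots> = 2"
    by (simp flip: exp_add)
  finally show ?thesis
    by (simp add: chi_def abs_mult)
qed

lemma psi_measurable [measurable]: "psi \<in> borel_measurable borel"
  unfolding psi_def by measurable

lemma chi_measurable [measurable]: "chi \<in> borel_measurable borel"
  unfolding chi_def by measurable

lemma continuous_on_psi [continuous_intros]: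
  "continuous_on S f \<Longrightarrow> continuous_on S (\<lambda>x. psi (f x))"
  unfolding psi_def by (intro continuous_intros)

lemma continuous_on_chi [continuous_intros]:
  "continuous_on S f \<Longrightarrow> continuous_on S (\<lambda>x. chi (f x))"
  unfolding chi_def by (intro continuous_intros)

lemma integrable_psi_shift: "integrable lborel (\<lambda>x. psi (x - c))"
proof -
  have "psi (x - c) = sqrt (2 * pi) * (normal_density c 1 x * (x - c) ^ 1)" for x
    by (simp add: psi_def normal_density_def field_simps)
  then show ?thesis
    using integrable_normal_moment[where \<mu>=c and \<sigma>=1 and k=1] by simp
qed

lemma integrable_chi_shift: "integrable lborel (\<lambda>x. chi (x - c))"
proof -
  have "chi (x - c) = sqrt (2 * pi) * (normal_density c 1 x * (x - c) ^ 2)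
      - sqrt (2 * pi) * (normal_density c 1 x * (x - c) ^ 0)" for x
    by (simp add: chi_def normal_density_def field_simps)
  then show ?thesis
    using integrable_normal_moment[where \<mu>=c and \<sigma>=1 and k=2]
      integrable_normal_moment[where \<mu>=c and \<sigma>=1 and k=0] by simp
qed

lemma integrable_bounded_mult:
  fixes f g :: "real \<Rightarrow> real"
  assumes "integrable lborel f" and [measurable]: "g \<in> borel_measurable borel"
    and bound: "\<And>x. \<bar>g x\<bar> \<le> B"
  shows "integrable lborel (\<lambda>x. g x * f x)"
proof (rule Bochner_Integration.integrable_bound)
  show "integrable lborel (\<lambda>x. B * f x)"
    using assms(1) by simp
  have [measurable]: "f \<in> borel_measurable lborel"
    using assms(1) by (rule borel_measurable_integrable)
  show "(\<lambda>x. g x * f x) \<in> borel_measurable lborel"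
    by measurable
  have "\<bar>g x\<bar> * \<bar>f x\<bar> \<le> \<bar>B\<bar> * \<bar>f x\<bar>" for x
    using bound[of x] by (intro mult_right_mono) auto
  then show "AE x in lborel. norm (g x * f x) \<le> norm (B * f x)"
    by (simp add: abs_mult)
qed

lemma integrable_psi_psi: "integrable lborel (\<lambda>x. psi (x - a) * psi (x - b))"
  by (rule integrable_bounded_mult[OF integrable_psi_shift _ abs_psi_le_1]) measurable

lemma integrable_chi_chi: "integrable lborel (\<lambda>x. chi (x - a) * chi (x - b))"
  by (rule integrable_bounded_mult[OF integrable_chi_shift _ abs_chi_le_2]) measurable

lemma continuous_square_integral_eq_0:
  fixes h :: "real \<Rightarrow> real"
  assumes "continuous_on UNIV h" "integrable lborel (\<lambda>x. (h x)\<^sup>2)"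
    and "(LINT x|lborel. (h x)\<^sup>2) = 0"
  shows "h x = 0"
proof -
  have "AE x in lborel. (h x)\<^sup>2 = 0"
    using integral_nonneg_eq_0_iff_AE[OF assms(2)] assms(3) by simp
  then have "AE x in lebesgue. x \<in> {x. h x = 0}"
    by (simp add: AE_completion)
  moreover have "closed {x. h x = 0}"
    using assms(1) by (intro closed_Collect_eq continuous_intros) auto
  ultimately show ?thesis
    using mem_closed_if_AE_lebesgue by blast
qed

lemma integral_square_pos:
  fixes h :: "real \<Rightarrow> real"
  assumes "continuous_on UNIV h" "integrable lborel (\<lambda>x. (h x)\<^sup>2)" and "h x \<noteq> 0"
  shows "(LINT x|lborel. (h x)\<^sup>2) > 0"
proof -
  have "(LINT x|lborel. (h x)\<^sup>2) \<ge> 0"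
    by (intro integral_nonneg_AE) simp
  moreover have "(LINT x|lborel. (h x)\<^sup>2) \<noteq> 0"
    using continuous_square_integral_eq_0[OF assms(1,2)] assms(3) by blast
  ultimately show ?thesis
    by linarith
qed

section \<open>The Gram matrix\<close>

definition psi_inner :: "real \<Rightarrow> real \<Rightarrow> real" where
  "psi_inner a b = (LINT x|lborel. psi (x - a) * psi (x - b))"

definition chi_inner :: "real \<Rightarrow> real \<Rightarrow> real" where
  "chi_inner a b = (LINT x|lborel. chi (x - a) * chi (x - b))"

lemma gram_eq:
  "gram \<theta> = vector [
     vector [psi_inner (\<theta>$1) (\<theta>$1), psi_inner (\<theta>$1) (\<theta>$2), 0, 0],
     vector [psi_inner (\<theta>$2) (\<theta>$1), psi_inner (\<theta>$2) (\<theta>$2), 0, 0],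
     vector [0, 0, chi_inner (\<theta>$3) (\<theta>$3), - chi_inner (\<theta>$3) (\<theta>$4)],
     vector [0, 0, - chi_inner (\<theta>$4) (\<theta>$3), chi_inner (\<theta>$4) (\<theta>$4)]]"
  by (simp add: gram_def vec_eq_iff forall_4 l2inner_def dtheta_eq psi_inner_def chi_inner_def)

lemma gram_mult_vec:
  "gram \<theta> *v v = vector [
     psi_inner (\<theta>$1) (\<theta>$1) * v$1 + psi_inner (\<theta>$1) (\<theta>$2) * v$2,
     psi_inner (\<theta>$2) (\<theta>$1) * v$1 + psi_inner (\<theta>$2) (\<theta>$2) * v$2,
     chi_inner (\<theta>$3) (\<theta>$3) * v$3 - chi_inner (\<theta>$3) (\<theta>$4) * v$4,
     chi_inner (\<theta>$4) (\<theta>$4) * v$4 - chi_inner (\<theta>$4) (\<theta>$3) * v$3]"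
  by (simp add: gram_eq vec_eq_iff forall_4 matrix_vector_mult_def sum_4)

lemma gvec_eq_gram_qvec:
  assumes "\<theta>$3 = \<theta>$1" "\<theta>$4 = \<theta>$2"
  shows "gvec \<theta> = gram \<theta> *v qvec"
  using assms
  by (simp add: gvec_def gram_mult_vec vec_eq_iff forall_4 l2inner_def dtheta_eq Fop_uhat qvec_def
      psi_inner_def chi_inner_def algebra_simps integral_add integral_diff integrable_psi_psi integrable_chi_chi)

lemma integral_psi_combination_square:
  "(LINT x|lborel. (u * psi (x - a) + w * psi (x - b))\<^sup>2) =
     u * (psi_inner a a * u + psi_inner a b * w) + w * (psi_inner b a * u + psi_inner b b * w)"
  and integrable_psi_combination_square:
  "integrable lborel (\<lambda>x. (u * psi (x - a) + w * psi (x - b))\<^sup>2)"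
proof -
  have sq: "(u * psi (x - a) + w * psi (x - b))\<^sup>2 =
      u * u * (psi (x - a) * psi (x - a)) + u * w * (psi (x - a) * psi (x - b))
      + w * u * (psi (x - b) * psi (x - a)) + w * w * (psi (x - b) * psi (x - b))" for x
    by (simp add: power2_eq_square algebra_simps)
  show "integrable lborel (\<lambda>x. (u * psi (x - a) + w * psi (x - b))\<^sup>2)"
    unfolding sq by (simp add: integrable_psi_psi)
  show "(LINT x|lborel. (u * psi (x - a) + w * psi (x - b))\<^sup>2) =
      u * (psi_inner a a * u + psi_inner a b * w) + w * (psi_inner b a * u + psi_inner b b * w)"
    unfolding sq psi_inner_def
    by (simp add: integral_add integrable_psi_psi algebra_simps)
qed

lemma integral_chi_combination_square:
  "(LINT x|lborel. (u * chi (x - c) - w * chi (x - d))\<^sup>2) =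
     u * (chi_inner c c * u - chi_inner c d * w) + w * (chi_inner d d * w - chi_inner d c * u)"
  and integrable_chi_combination_square:
  "integrable lborel (\<lambda>x. (u * chi (x - c) - w * chi (x - d))\<^sup>2)"
proof -
  have sq: "(u * chi (x - c) - w * chi (x - d))\<^sup>2 =
      u * u * (chi (x - c) * chi (x - c)) - u * w * (chi (x - c) * chi (x - d))
      - w * u * (chi (x - d) * chi (x - c)) + w * w * (chi (x - d) * chi (x - d))" for x
    by (simp add: power2_eq_square algebra_simps)
  show "integrable lborel (\<lambda>x. (u * chi (x - c) - w * chi (x - d))\<^sup>2)"
    unfolding sq by (simp add: integrable_chi_chi)
  show "(LINT x|lborel. (u * chi (x - c) - w * chi (x - d))\<^sup>2) =
      u * (chi_inner c c * u - chi_inner c d * w) + w * (chi_inner d d * w - chi_inner d c * u)"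
    unfolding sq chi_inner_def
    by (simp add: integral_add integral_diff integrable_chi_chi algebra_simps)
qed

lemma gram_kernel:
  assumes "gram \<theta> *v v = 0"
  shows "v$1 * psi (x - \<theta>$1) + v$2 * psi (x - \<theta>$2) = 0"
    and "v$3 * chi (x - \<theta>$3) - v$4 * chi (x - \<theta>$4) = 0"
proof -
  have rows: "(gram \<theta> *v v) $ i = 0" for i
    using assms by simp
  have "(LINT x|lborel. (v$1 * psi (x - \<theta>$1) + v$2 * psi (x - \<theta>$2))\<^sup>2) = 0"
    using rows[of 1] rows[of 2] by (simp add: integral_psi_combination_square gram_mult_vec)
  moreover have "continuous_on UNIV (\<lambda>x. v$1 * psi (x - \<theta>$1) + v$2 * psi (x - \<theta>$2))"
    by (intro continuous_intros)
  ultimately show "v$1 * psi (x - \<theta>$1) + v$2 * psi (x - \<theta>$2) = 0"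
    using continuous_square_integral_eq_0 integrable_psi_combination_square by blast
  have "(LINT x|lborel. (v$3 * chi (x - \<theta>$3) - v$4 * chi (x - \<theta>$4))\<^sup>2) = 0"
    using rows[of 3] rows[of 4] by (simp add: integral_chi_combination_square gram_mult_vec)
  moreover have "continuous_on UNIV (\<lambda>x. v$3 * chi (x - \<theta>$3) - v$4 * chi (x - \<theta>$4))"
    by (intro continuous_intros)
  ultimately show "v$3 * chi (x - \<theta>$3) - v$4 * chi (x - \<theta>$4) = 0"
    using continuous_square_integral_eq_0 integrable_chi_combination_square by blast
qed

lemma psi_shifts_independent:
  assumes "a \<noteq> b" and "\<And>x. u * psi (x - a) + w * psi (x - b) = 0"
  shows "u = 0" "w = 0"
proof -
  show "w = 0"
    using assms(1) assms(2)[of a] by (simp add: psi_def)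
  then show "u = 0"
    using assms(2)[of "a + 1"] by (simp add: psi_def)
qed

lemma chi_shifts_independent:
  assumes "c \<noteq> d" and "\<And>x. u * chi (x - c) - w * chi (x - d) = 0"
  shows "u = 0" "w = 0"
proof -
  show "w = 0"
  proof (rule ccontr)
    assume "w \<noteq> 0"
    \<comment> \<open>\<open>chi\<close> vanishes exactly at \<open>\<plusminus>1\<close>, so \<open>c - d \<plusminus> 1 \<in> {-1, 1}\<close>, forcing \<open>c = d\<close>.\<close>
    then have "chi (c - d + 1) = 0" "chi (c - d - 1) = 0"
      using assms(2)[of "c + 1"] assms(2)[of "c - 1"] by (simp_all add: chi_def algebra_simps)
    then have "(c - d + 1)\<^sup>2 = 1" "(c - d - 1)\<^sup>2 = 1"
      by (simp_all add: chi_def)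
    then have "c - d = 0"
      by (simp add: power2_eq_square algebra_simps)
    with assms(1) show False by simp
  qed
  then show "u = 0"
    using assms(2)[of c] by (simp add: chi_def)
qed

lemma gram_kernel_trivial:
  assumes "\<theta>$1 \<noteq> \<theta>$2" "\<theta>$3 \<noteq> \<theta>$4" and "gram \<theta> *v v = 0"
  shows "v = 0"
  using psi_shifts_independent[OF assms(1) gram_kernel(1)[OF assms(3)]]
    chi_shifts_independent[OF assms(2) gram_kernel(2)[OF assms(3)]]
  by (simp add: vec_eq_iff forall_4)

lemma psi_inner_self_pos: "psi_inner a a > 0"
proof -
  have "continuous_on UNIV (\<lambda>x. psi (x - a))"
    by (intro continuous_intros)
  moreover have "integrable lborel (\<lambda>x. (psi (x - a))\<^sup>2)"
    using integrable_psi_psi[of a a] by (simp add: power2_eq_square)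
  moreover have "psi (a + 1 - a) \<noteq> 0"
    by (simp add: psi_def)
  ultimately have "(LINT x|lborel. (psi (x - a))\<^sup>2) > 0"
    by (rule integral_square_pos)
  then show ?thesis
    by (simp add: psi_inner_def power2_eq_square)
qed

lemma chi_inner_self_pos: "chi_inner c c > 0"
proof -
  have "continuous_on UNIV (\<lambda>x. chi (x - c))"
    by (intro continuous_intros)
  moreover have "integrable lborel (\<lambda>x. (chi (x - c))\<^sup>2)"
    using integrable_chi_chi[of c c] by (simp add: power2_eq_square)
  moreover have "chi (c - c) \<noteq> 0"
    by (simp add: chi_def)
  ultimately have "(LINT x|lborel. (chi (x - c))\<^sup>2) > 0"
    by (rule integral_square_pos)
  then show ?thesis
    by (simp add: chi_inner_def power2_eq_square)
qed

section \<open>The trajectory through the collision\<close>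

lemma theta_star_nth [simp]:
  "theta_star t $ 1 = -2 + t" "theta_star t $ 2 = 2 - t"
  "theta_star t $ 3 = -2 + t" "theta_star t $ 4 = 2 - t"
  by (simp_all add: theta_star_def)

lemma qvec_nth [simp]: "qvec $ 1 = 1" "qvec $ 2 = -1" "qvec $ 3 = 1" "qvec $ 4 = -1"
  by (simp_all add: qvec_def)

lemma theta_star_has_vector_derivative: "(theta_star has_vector_derivative qvec) (at t within S)"
proof -
  have affine: "theta_star = (\<lambda>t. vector [-2, 2, -2, 2] + t *\<^sub>R qvec)"
    by (simp add: fun_eq_iff vec_eq_iff forall_4)
  show ?thesis
    unfolding affine by (auto intro!: derivative_eq_intros)
qed

lemma theta_star_2: "theta_star 2 = 0"
  by (simp add: vec_eq_iff forall_4)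

lemma
  assumes "t \<noteq> 2"
  shows eta_bar_theta_star: "eta_bar (theta_star t) = qvec"
    and null_proj_gram_theta_star: "null_proj (gram (theta_star t)) v = 0"
proof -
  have "theta_star t $ 1 \<noteq> theta_star t $ 2" "theta_star t $ 3 \<noteq> theta_star t $ 4"
    using assms by simp_all
  then have kernel: "gram (theta_star t) *v w = 0 \<Longrightarrow> w = 0" for w
    by (rule gram_kernel_trivial)
  have "gvec (theta_star t) = gram (theta_star t) *v qvec"
    by (rule gvec_eq_gram_qvec) simp_all
  then show "eta_bar (theta_star t) = qvec"
    unfolding eta_bar_def using pinv_mult_cancel_of_trivial_kernel[OF kernel] by simp
  show "null_proj (gram (theta_star t)) v = 0"
    using null_proj_of_trivial_kernel[OF kernel] .
qed

lemma gram_0: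
  defines "a \<equiv> psi_inner 0 0" and "c \<equiv> chi_inner 0 0"
  shows "gram 0 = vector [vector [a, a, 0, 0], vector [a, a, 0, 0],
                          vector [0, 0, c, -c], vector [0, 0, -c, c]]"
  unfolding a_def c_def gram_eq by simp

lemma pinv_gram_0:
  defines "a \<equiv> psi_inner 0 0" and "c \<equiv> chi_inner 0 0"
  shows "pinv (gram 0) =
    vector [vector [1/(4*a), 1/(4*a), 0, 0], vector [1/(4*a), 1/(4*a), 0, 0],
            vector [0, 0, 1/(4*c), -1/(4*c)], vector [0, 0, -1/(4*c), 1/(4*c)]]"
proof -
  have "a \<noteq> 0" "c \<noteq> 0"
    unfolding a_def c_def using psi_inner_self_pos chi_inner_self_pos by (metis less_irrefl)+
  then show ?thesis
    unfolding gram_0 a_def[symmetric] c_def[symmetric]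
    by (intro pinv_eqI)
      (simp_all add: vec_eq_iff forall_4 matrix_matrix_mult_def sum_4 transpose_def field_simps)
qed

lemma eta_bar_0: "eta_bar 0 = vector [0, 0, 1, -1]"
proof -
  have "gvec 0 = gram 0 *v qvec"
    by (rule gvec_eq_gram_qvec) simp_all
  moreover have "chi_inner 0 0 \<noteq> 0"
    using chi_inner_self_pos by (metis less_irrefl)
  ultimately show ?thesis
    unfolding eta_bar_def pinv_gram_0
    by (simp add: gram_0 vec_eq_iff forall_4 matrix_vector_mult_def sum_4 field_simps)
qed

lemma null_proj_gram_0: "null_proj (gram 0) (\<mu> *\<^sub>R qvec) = \<mu> *\<^sub>R vector [1, -1, 0, 0]"
proof (rule null_proj_eqI)
  show "gram 0 *v (\<mu> *\<^sub>R vector [1, -1, 0, 0]) = 0"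
    by (simp add: gram_0 vec_eq_iff forall_4 matrix_vector_mult_def sum_4)
next
  fix w :: "real^4"
  assume "gram 0 *v w = 0"
  then have "(gram 0 *v w) $ 3 = 0"
    by simp
  then have "chi_inner 0 0 * (w$3 - w$4) = 0"
    by (simp add: gram_mult_vec algebra_simps)
  then have "w$3 = w$4"
    using chi_inner_self_pos[of 0] by simp
  then show "(\<mu> *\<^sub>R qvec - \<mu> *\<^sub>R vector [1, -1, 0, 0]) \<bullet> w = 0"
    by (simp add: inner_vec_def sum_4 algebra_simps)
qed

lemma dfo_velocity_theta_star:
  assumes "t = 2 \<Longrightarrow> lam * \<mu> = 1"
  shows "eta_bar (theta_star t) + lam *\<^sub>R null_proj (gram (theta_star t)) (\<mu> *\<^sub>R qvec) = qvec"
proof (cases "t = 2")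
  case True
  then show ?thesis
    using assms by (simp add: theta_star_2 eta_bar_0 null_proj_gram_0 vec_eq_iff forall_4)
next
  case False
  then show ?thesis
    by (simp add: eta_bar_theta_star null_proj_gram_theta_star)
qed

lemma has_integral_exp_decay:
  fixes \<tau> t :: real
  assumes "\<tau> > 0" "t \<ge> 0"
  shows "((\<lambda>s. exp (- s / \<tau>)) has_integral \<tau> * (1 - exp (- t / \<tau>))) {0..t}"
proof -
  have "((\<lambda>s. exp (- s / \<tau>)) has_integral (- \<tau> * exp (- t / \<tau>)) - (- \<tau> * exp (- 0 / \<tau>))) {0..t}"
    using assms
    by (intro fundamental_theorem_of_calculus)
      (auto intro!: derivative_eq_intros simp flip: has_real_derivative_iff_has_vector_derivative)
  then show ?thesis
    by (simp add: algebra_simps)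
qed

lemma onsager_theta_star:
  fixes \<tau> t :: real
  assumes "\<tau> > 0" "t \<ge> 0"
  shows "((\<lambda>s. eta_bar (theta_star s) - (1 - exp (- s / \<tau>)) *\<^sub>R qvec)
           has_integral \<tau> *\<^sub>R (1 - exp (- t / \<tau>)) *\<^sub>R qvec) {0..t}"
proof (rule has_integral_spike[where S="{2}"])
  show "eta_bar (theta_star s) - (1 - exp (- s / \<tau>)) *\<^sub>R qvec = exp (- s / \<tau>) *\<^sub>R qvec"
    if "s \<in> {0..t} - {2}" for s
    using that eta_bar_theta_star[of s] by (simp add: algebra_simps)
  show "((\<lambda>s. exp (- s / \<tau>) *\<^sub>R qvec) has_integral \<tau> *\<^sub>R (1 - exp (- t / \<tau>)) *\<^sub>R qvec) {0..t}"
    using has_integral_scaleR_left[OF has_integral_exp_decay[OF assms], of qvec] by simp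
qed simp

lemma uhat_theta_star_exact:
  "fst (uhat (theta_star t) x) = u_exact t x"
  "((\<lambda>s. u_exact s x) has_real_derivative snd (uhat (theta_star t) x)) (at t within S)"
proof -
  show "fst (uhat (theta_star t) x) = u_exact t x"
    by (simp add: uhat_def uhat1_def u_exact_def phi_def algebra_simps)
  show "((\<lambda>s. u_exact s x) has_real_derivative snd (uhat (theta_star t) x)) (at t within S)"
    unfolding u_exact_def
    by (rule derivative_eq_intros refl)+ (simp add: uhat_def uhat2_def dmu_phi_eq algebra_simps)
qed

theorem propositionA1:
  fixes \<tau> :: real
  assumes "\<tau> > 0"
  defines "lam \<equiv> 1 / (1 - exp (-2 / \<tau>))"
  shows "(\<exists>m :: real \<Rightarrow> real^4.
            m 0 = 0 \<and>
            (\<forall>t\<ge>0. ((\<lambda>s. eta_bar (theta_star s) - m s) has_integral (\<tau> *\<^sub>R m t)) {0..t}) \<and>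
            (\<forall>t\<ge>0. (theta_star has_vector_derivative
                       (eta_bar (theta_star t) + lam *\<^sub>R null_proj (gram (theta_star t)) (m t)))
                     (at t within {0..})) \<and>
            (\<forall>t. 0 \<le> t \<and> t < 2 \<longrightarrow> m t = (1 - exp (- t / \<tau>)) *\<^sub>R qvec) \<and>
            m 2 = (1 - exp (-2 / \<tau>)) *\<^sub>R qvec)
       \<and> (\<forall>t\<ge>0. \<forall>x. fst (uhat (theta_star t) x) = u_exact t x \<and>
                    ((\<lambda>s. u_exact s x) has_real_derivative snd (uhat (theta_star t) x))
                      (at t within {0..}))"
proof -
  define m :: "real \<Rightarrow> real^4" where "m t = (1 - exp (- t / \<tau>)) *\<^sub>R qvec" for t
  have velocity: "eta_bar (theta_star t) + lam *\<^sub>R null_proj (gram (theta_star t)) (m t) = qvec" for t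
    unfolding m_def using assms(1) by (intro dfo_velocity_theta_star) (simp add: lam_def)
  have onsager: "((\<lambda>s. eta_bar (theta_star s) - m s) has_integral \<tau> *\<^sub>R m t) {0..t}" if "t \<ge> 0" for t
    unfolding m_def using onsager_theta_star[OF assms(1) that] by simp
  show ?thesis
    using velocity onsager theta_star_has_vector_derivative uhat_theta_star_exact
    by (intro conjI exI[of _ m]) (auto simp: m_def)
qed

end
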